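(* In the single-deceiver single-oblivious quadratic setting of the context, let $\Omega$ be the set of attainable values $J^{\mathrm{ref}}\in\mathbb{R}$, and assume $r_{1,2}\neq0$. Then: (a) if $\varepsilon_1r_{1,2}q_1q_3>0$, then $\Omega=\mathcal{J}_1\Big(\big(-\infty,-\tfrac{r_{1,1}}{2r_{1,2}}\big)\cap f(\Delta_1)\Big)$; (b) if $\varepsilon_1r_{1,2}q_1q_3<0$, then $\Omega=\mathcal{J}_1\Big(\big(-\tfrac{r_{1,1}}{2r_{1,2}},\infty\big)\cap f(\Delta_1)\Big)$.
   Context: Quadratic game: $J_i(x)=\frac12x^\top Q_ix+b_i^\top x+p_i$, $Q_i\in\mathbb{R}^{N\times N}$ symmetric, $b_i\in\mathbb{R}^N$, $p_i\in\mathbb{R}$. $(Q)_{j:}$ = $j$-th row, $(Q)_{:j}$ = $j$-th column, $(b)_j$ = $j$-th entry; $[Q]^{d,1}$ is $Q$ with row $d$ and column $1$ removed, $[Q]^{d,\sim}$ is $Q$ with only row $d$ removed. $\mathcal{Q}$ is the matrix with $m$-th row $(Q_m)_{m:}$, $\mathcal{B}$ the vector with $m$-th entry $(b_m)_m$. Player 1 is the only deceiver and deceives only player $d\neq1$. $\bar{\mathcal{Q}}$ is the $N\times N$ matrix whose only nonzero row is row $d$, equal to $(Q_d)_{1:}$; $\bar{\mathcal{B}}$ the vector whose only nonzero entry is entry $d$, equal to $(b_d)_1$. For $\delta\in\mathbb{R}$, $\mathcal{Q}_\delta=\mathcal{Q}+\delta\bar{\mathcal{Q}}$, $\mathcal{B}_\delta=\mathcal{B}+\delta\bar{\mathcal{B}}$.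 Fix $k>0$; assume $-k\mathcal{Q}$ is Hurwitz and $[\mathcal{Q}]^{d,1}$ is invertible. $x^*=-\mathcal{Q}^{-1}\mathcal{B}$; $\Delta_1=\{\delta\in\mathbb{R}:-k\mathcal{Q}_\delta\text{ Hurwitz}\}$; for $\delta\in\Delta_1$, $x_\delta=-\mathcal{Q}_\delta^{-1}\mathcal{B}_\delta$ (the deceptive Nash equilibrium). $\Phi=\begin{bmatrix}1\\-([\mathcal{Q}]^{d,1})^{-1}([\mathcal{Q}]^{d,\sim})_{:1}\end{bmatrix}\in\mathbb{R}^N$; $q_1=-\big((b_d)_1+(Q_d)_{1:}x^*\big)$, $q_2=(Q_d)_{1:}\Phi$, $q_3=(Q_d)_{d:}\Phi$; $r_{i,2}=\frac12\Phi^\top Q_i\Phi$, $r_{i,1}=(Q_ix^*+b_i)^\top\Phi$; $f(\delta)=\frac{q_1\delta}{q_2\delta+q_3}$ for $\delta\in\Delta_1$; $\mathcal{J}_i(e)=r_{i,2}e^2+r_{i,1}e+J_i(x^* )$. Given a nonzero constant $\varepsilon_1$, a value $J^{\mathrm{ref}}\in\mathbb{R}$ is attainable if there exists $\delta^*\in\Delta_1$ with $J_1(x_{\delta^*})=J^{\mathrm{ref}}$ and $\varepsilon_1\frac{d}{d\delta}J_1(x_\delta)\big|_{\delta=\delta^*}<0$. *)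

theory Defs
  imports Complex_Main "Jordan_Normal_Form.Determinant" "Jordan_Normal_Form.Char_Poly"
begin

text \<open>Conventions: players and coordinates are indexed 0..N-1 (paper's index m is our m-1).
  Player 1 of the paper is index 0; the deceived player d is an index with 0 < d < N.\<close>

definition hurwitz :: "real mat \<Rightarrow> bool" where
  "hurwitz M \<longleftrightarrow> M \<in> carrier_mat (dim_row M) (dim_row M) \<and>
     (\<forall>l. eigenvalue (map_mat complex_of_real M) l \<longrightarrow> Re l < 0)"

definition minv :: "real mat \<Rightarrow> real mat" where
  "minv A = (SOME B. B \<in> carrier_mat (dim_row A) (dim_row A) \<and>
                     A * B = 1\<^sub>m (dim_row A) \<and> B * A = 1\<^sub>m (dim_row A))"

definition del_row :: "'a mat \<Rightarrow> nat \<Rightarrow> 'a mat" where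
  "del_row A i = mat (dim_row A - 1) (dim_col A) (\<lambda>(r,c). A $$ (insert_index i r, c))"

definition Jc :: "real mat \<Rightarrow> real vec \<Rightarrow> real \<Rightarrow> real vec \<Rightarrow> real" where
  "Jc Qi bi c x = 1/2 * (x \<bullet> (Qi *\<^sub>v x)) + bi \<bullet> x + c"

definition calQ :: "nat \<Rightarrow> (nat \<Rightarrow> real mat) \<Rightarrow> real mat" where
  "calQ N Q = mat N N (\<lambda>(m,j). Q m $$ (m,j))"

definition calB :: "nat \<Rightarrow> (nat \<Rightarrow> real vec) \<Rightarrow> real vec" where
  "calB N b = vec N (\<lambda>m. b m $ m)"

definition barQ :: "nat \<Rightarrow> (nat \<Rightarrow> real mat) \<Rightarrow> nat \<Rightarrow> real mat" where
  "barQ N Q d = mat N N (\<lambda>(m,j). if m = d then Q d $$ (0,j) else 0)"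

definition barB :: "nat \<Rightarrow> (nat \<Rightarrow> real vec) \<Rightarrow> nat \<Rightarrow> real vec" where
  "barB N b d = vec N (\<lambda>m. if m = d then b d $ 0 else 0)"

definition Qdelta :: "nat \<Rightarrow> (nat \<Rightarrow> real mat) \<Rightarrow> nat \<Rightarrow> real \<Rightarrow> real mat" where
  "Qdelta N Q d \<delta> = calQ N Q + \<delta> \<cdot>\<^sub>m barQ N Q d"

definition Bdelta :: "nat \<Rightarrow> (nat \<Rightarrow> real vec) \<Rightarrow> nat \<Rightarrow> real \<Rightarrow> real vec" where
  "Bdelta N b d \<delta> = calB N b + \<delta> \<cdot>\<^sub>v barB N b d"

definition xstar :: "nat \<Rightarrow> (nat \<Rightarrow> real mat) \<Rightarrow> (nat \<Rightarrow> real vec) \<Rightarrow> real vec" where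
  "xstar N Q b = - (minv (calQ N Q) *\<^sub>v calB N b)"

definition Delta1 :: "nat \<Rightarrow> (nat \<Rightarrow> real mat) \<Rightarrow> nat \<Rightarrow> real \<Rightarrow> real set" where
  "Delta1 N Q d k = {\<delta>. hurwitz (- (k \<cdot>\<^sub>m Qdelta N Q d \<delta>))}"

definition xdelta :: "nat \<Rightarrow> (nat \<Rightarrow> real mat) \<Rightarrow> (nat \<Rightarrow> real vec) \<Rightarrow> nat \<Rightarrow> real \<Rightarrow> real vec" where
  "xdelta N Q b d \<delta> = - (minv (Qdelta N Q d \<delta>) *\<^sub>v Bdelta N b d \<delta>)"

definition Phi :: "nat \<Rightarrow> (nat \<Rightarrow> real mat) \<Rightarrow> nat \<Rightarrow> real vec" where
  "Phi N Q d = (let w = - (minv (mat_delete (calQ N Q) d 0) *\<^sub>v col (del_row (calQ N Q) d) 0)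
                in vec N (\<lambda>i. if i = 0 then 1 else w $ (i - 1)))"

definition q1 :: "nat \<Rightarrow> (nat \<Rightarrow> real mat) \<Rightarrow> (nat \<Rightarrow> real vec) \<Rightarrow> nat \<Rightarrow> real" where
  "q1 N Q b d = - (b d $ 0 + row (Q d) 0 \<bullet> xstar N Q b)"

definition q2 :: "nat \<Rightarrow> (nat \<Rightarrow> real mat) \<Rightarrow> nat \<Rightarrow> real" where
  "q2 N Q d = row (Q d) 0 \<bullet> Phi N Q d"

definition q3 :: "nat \<Rightarrow> (nat \<Rightarrow> real mat) \<Rightarrow> nat \<Rightarrow> real" where
  "q3 N Q d = row (Q d) d \<bullet> Phi N Q d"

definition r2 :: "nat \<Rightarrow> (nat \<Rightarrow> real mat) \<Rightarrow> nat \<Rightarrow> nat \<Rightarrow> real" where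
  "r2 N Q d i = 1/2 * (Phi N Q d \<bullet> (Q i *\<^sub>v Phi N Q d))"

definition r1 :: "nat \<Rightarrow> (nat \<Rightarrow> real mat) \<Rightarrow> (nat \<Rightarrow> real vec) \<Rightarrow> nat \<Rightarrow> nat \<Rightarrow> real" where
  "r1 N Q b d i = (Q i *\<^sub>v xstar N Q b + b i) \<bullet> Phi N Q d"

definition fdec :: "nat \<Rightarrow> (nat \<Rightarrow> real mat) \<Rightarrow> (nat \<Rightarrow> real vec) \<Rightarrow> nat \<Rightarrow> real \<Rightarrow> real" where
  "fdec N Q b d \<delta> = q1 N Q b d * \<delta> / (q2 N Q d * \<delta> + q3 N Q d)"

definition calJ :: "nat \<Rightarrow> (nat \<Rightarrow> real mat) \<Rightarrow> (nat \<Rightarrow> real vec) \<Rightarrow> (nat \<Rightarrow> real) \<Rightarrow> nat \<Rightarrow> nat \<Rightarrow> real \<Rightarrow> real" where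
  "calJ N Q b p d i e = r2 N Q d i * e^2 + r1 N Q b d i * e + Jc (Q i) (b i) (p i) (xstar N Q b)"

definition attainable :: "nat \<Rightarrow> (nat \<Rightarrow> real mat) \<Rightarrow> (nat \<Rightarrow> real vec) \<Rightarrow> (nat \<Rightarrow> real) \<Rightarrow> nat \<Rightarrow> real \<Rightarrow> real \<Rightarrow> real \<Rightarrow> bool" where
  "attainable N Q b p d k eps1 Jref \<longleftrightarrow>
     (\<exists>\<delta>s \<in> Delta1 N Q d k. Jc (Q 0) (b 0) (p 0) (xdelta N Q b d \<delta>s) = Jref \<and>
        (\<exists>D. ((\<lambda>\<delta>. Jc (Q 0) (b 0) (p 0) (xdelta N Q b d \<delta>)) has_real_derivative D) (at \<delta>s)
             \<and> eps1 * D < 0))"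

end

theory Submission
  imports Defs
begin

(* Only row d of Q_\<delta> depends on \<delta>, and invertibility of [Q]^{d,1} makes Phi span the common
   kernel of the other rows of Q; indeed Q_\<delta> Phi = (q2 \<delta> + q3) e_d.  Hence q2 \<delta> + q3 \<noteq> 0
   on \<Delta>1 (otherwise Q_\<delta> would be singular), and there the deceptive equilibrium is
   x_\<delta> = x* + f(\<delta>) Phi: row d of Q_\<delta> x = -B_\<delta> says exactly q1 \<delta> = f(\<delta>) (q2 \<delta> + q3).
   So J1(x_\<delta>) = \<J>1(f(\<delta>)), whose derivative in \<delta> is (2 r2 f(\<delta>) + r1) q1 q3 / (q2 \<delta> + q3)^2.
   Multiplied by eps1 it is negative iff f(\<delta>) lies on the side of the vertex -r1/(2 r2) of the
   parabola \<J>1 selected by the sign of eps1 r2 q1 q3. *)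

lemma mult_mat_vec_uminus:
  assumes "(A :: 'a :: ring mat) \<in> carrier_mat nr nc" "v \<in> carrier_vec nc"
  shows "A *\<^sub>v (- v) = - (A *\<^sub>v v)"
  using assms by (intro eq_vecI) (auto simp: scalar_prod_uminus_right)

lemma smult_mat_mult_vec:
  assumes "(A :: 'a :: comm_ring mat) \<in> carrier_mat nr nc" "v \<in> carrier_vec nc"
  shows "(k \<cdot>\<^sub>m A) *\<^sub>v v = k \<cdot>\<^sub>v (A *\<^sub>v v)"
  using assms by (intro eq_vecI) (auto simp: scalar_prod_def sum_distrib_left ac_simps)

lemma hurwitz_mult_vec_eq_zero:
  assumes hur: "hurwitz A" and v: "v \<in> carrier_vec (dim_row A)"
    and Av: "A *\<^sub>v v = 0\<^sub>v (dim_row A)"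
  shows "v = 0\<^sub>v (dim_row A)"
proof (rule ccontr)
  assume "v \<noteq> 0\<^sub>v (dim_row A)"
  with v Av have "eigenvector A v 0"
    unfolding eigenvector_def by auto
  moreover have A: "A \<in> carrier_mat (dim_row A) (dim_row A)"
    using hur unfolding hurwitz_def by simp
  ultimately have "eigenvalue (map_mat complex_of_real A) 0"
    using of_real_hom.eigenvalue_hom[OF A] unfolding eigenvalue_def by fastforce
  with hur show False unfolding hurwitz_def by fastforce
qed

lemma hurwitz_neg_smult_mult_vec_eq_zero:
  assumes hur: "hurwitz (- (k \<cdot>\<^sub>m M))" and M: "M \<in> carrier_mat n n"
    and v: "v \<in> carrier_vec n" and Mv: "M *\<^sub>v v = 0\<^sub>v n"
  shows "v = 0\<^sub>v n"
proof -
  have "(- (k \<cdot>\<^sub>m M)) *\<^sub>v v = 0\<^sub>v n"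
    using M v Mv by (auto simp: smult_mat_mult_vec intro!: eq_vecI)
  with hurwitz_mult_vec_eq_zero[OF hur] M v show ?thesis by simp
qed

lemma invertible_mat_if_mult_vec_inj:
  assumes A: "(A :: 'a :: field mat) \<in> carrier_mat n n"
    and inj: "\<And>v. v \<in> carrier_vec n \<Longrightarrow> A *\<^sub>v v = 0\<^sub>v n \<Longrightarrow> v = 0\<^sub>v n"
  shows "invertible_mat A"
proof -
  have "det A \<noteq> 0" using det_0_iff_vec_prod_zero[OF A] inj by auto
  from det_non_zero_imp_unit[OF A this, of "()"] obtain B where
    "B \<in> carrier_mat n n" "A * B = 1\<^sub>m n" "B * A = 1\<^sub>m n"
    unfolding Units_def ring_mat_def by auto
  with A show ?thesis unfolding invertible_mat_def inverts_mat_def by auto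
qed

lemma minv_inverse:
  assumes A: "A \<in> carrier_mat n n" and "invertible_mat A"
  shows "minv A \<in> carrier_mat n n" "A * minv A = 1\<^sub>m n" "minv A * A = 1\<^sub>m n"
proof -
  from assms obtain B where "A * B = 1\<^sub>m n" "B * A = 1\<^sub>m (dim_row B)"
    unfolding invertible_mat_def inverts_mat_def by auto
  with A have "\<exists>B. B \<in> carrier_mat (dim_row A) (dim_row A) \<and>
      A * B = 1\<^sub>m (dim_row A) \<and> B * A = 1\<^sub>m (dim_row A)"
    by (metis carrier_matD(2) carrier_matI index_mult_mat(2,3) index_one_mat(2,3))
  from someI_ex[OF this] A show "minv A \<in> carrier_mat n n" "A * minv A = 1\<^sub>m n" "minv A * A = 1\<^sub>m n"
    unfolding minv_def by auto
qed

lemma mult_mat_vec_minv: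
  assumes "A \<in> carrier_mat n n" "invertible_mat A" "y \<in> carrier_vec n"
  shows "A *\<^sub>v (minv A *\<^sub>v y) = y"
  using assoc_mult_mat_vec[symmetric, OF assms(1) minv_inverse(1)[OF assms(1,2)] assms(3)]
    minv_inverse(2)[OF assms(1,2)] assms(3) by simp

lemma minv_mult_mat_vec:
  assumes "A \<in> carrier_mat n n" "invertible_mat A" "x \<in> carrier_vec n"
  shows "minv A *\<^sub>v (A *\<^sub>v x) = x"
  using assoc_mult_mat_vec[symmetric, OF minv_inverse(1)[OF assms(1,2)] assms(1) assms(3)]
    minv_inverse(3)[OF assms(1,2)] assms(3) by simp

lemma Jc_add_smult:
  assumes Q0: "Q0 \<in> carrier_mat n n" and sym: "transpose_mat Q0 = Q0" and b0: "b0 \<in> carrier_vec n"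
    and x: "x \<in> carrier_vec n" and v: "v \<in> carrier_vec n"
  shows "Jc Q0 b0 c (x + e \<cdot>\<^sub>v v)
    = 1/2 * (v \<bullet> (Q0 *\<^sub>v v)) * e^2 + ((Q0 *\<^sub>v x + b0) \<bullet> v) * e + Jc Q0 b0 c x"
proof -
  have Qx: "Q0 *\<^sub>v x \<in> carrier_vec n" and Qv: "Q0 *\<^sub>v v \<in> carrier_vec n" using Q0 x v by auto
  have "Q0 *\<^sub>v (x + e \<cdot>\<^sub>v v) = Q0 *\<^sub>v x + e \<cdot>\<^sub>v (Q0 *\<^sub>v v)"
    using mult_add_distrib_mat_vec[OF Q0 x, of "e \<cdot>\<^sub>v v"] mult_mat_vec[OF Q0 v] v by auto
  moreover have "x \<bullet> (Q0 *\<^sub>v v) = (Q0 *\<^sub>v x) \<bullet> v"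
    using transpose_vec_mult_scalar[OF Q0 v x] sym by simp
  moreover have "v \<bullet> (Q0 *\<^sub>v x) = (Q0 *\<^sub>v x) \<bullet> v" using comm_scalar_prod[OF v Qx] .
  ultimately show ?thesis
    using x v b0 Qx Qv
    by (simp add: Jc_def add_scalar_prod_distrib[of _ n] scalar_prod_add_distrib[of _ n]
        algebra_simps power2_eq_square)
qed

lemma DERIV_linear_over_affine:
  fixes a c e x :: real
  assumes "c * x + e \<noteq> 0"
  shows "((\<lambda>x. a * x / (c * x + e)) has_real_derivative a * e / (c * x + e)^2) (at x)"
proof -
  have "((\<lambda>x. a * x / (c * x + e)) has_real_derivative
      (a * (c * x + e) - a * x * c) / (c * x + e)^2) (at x)"
    using assms by (auto intro!: derivative_eq_intros simp: power2_eq_square)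
  then show ?thesis by (simp add: algebra_simps)
qed

(* The sign of eps g'(e) f'(\<delta>) for g(e) = a e^2 + c e + const and f'(\<delta>) = q / S^2. *)
lemma chain_derivative_less_0_iff:
  fixes eps a c e q S :: real
  assumes a: "a \<noteq> 0" and S: "S \<noteq> 0"
  shows "eps * ((2 * a * e + c) * (q / S^2)) < 0 \<longleftrightarrow> eps * a * q * (e - - c / (2 * a)) < 0"
proof -
  have eq: "eps * ((2 * a * e + c) * (q / S^2)) = 2 * (eps * a * q * (e - - c / (2 * a))) / S^2"
    using a S by (simp add: field_simps)
  have "2 * X / S^2 < 0 \<longleftrightarrow> X < 0" for X :: real
    using S by (simp add: divide_less_0_iff)
  then show ?thesis unfolding eq .
qed

lemma Collect_mult_diff_less_0:
  fixes P v :: real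
  shows "0 < P \<Longrightarrow> {e. P * (e - v) < 0} = {..<v}"
    and "P < 0 \<Longrightarrow> {e. P * (e - v) < 0} = {v<..}"
  by (auto simp: mult_less_0_iff)

lemma calQ_carrier: "calQ N Q \<in> carrier_mat N N"
  unfolding calQ_def by simp

lemma row_calQ:
  assumes "m < N" "Q m \<in> carrier_mat N N"
  shows "row (calQ N Q) m = row (Q m) m"
  using assms by (intro eq_vecI) (auto simp: calQ_def)

lemma calQ_mult_xstar:
  assumes "invertible_mat (calQ N Q)"
  shows "calQ N Q *\<^sub>v xstar N Q b = - calB N b"
proof -
  have "calQ N Q *\<^sub>v (minv (calQ N Q) *\<^sub>v calB N b) = calB N b"
    using mult_mat_vec_minv[OF calQ_carrier assms] by (simp add: calB_def)
  then show ?thesis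
    using minv_inverse(1)[OF calQ_carrier assms]
    by (simp add: xstar_def calB_def mult_mat_vec_uminus[OF calQ_carrier])
qed

lemma barB_eq: "barB N b d = (b d $ 0) \<cdot>\<^sub>v unit_vec N d"
  unfolding barB_def by (intro eq_vecI) (auto simp: unit_vec_def)

lemma barQ_mult_vec:
  assumes "Q d \<in> carrier_mat N N" "d < N" "y \<in> carrier_vec N"
  shows "barQ N Q d *\<^sub>v y = (row (Q d) 0 \<bullet> y) \<cdot>\<^sub>v unit_vec N d"
  using assms by (intro eq_vecI) (auto simp: barQ_def scalar_prod_def)

lemma Qdelta_mult_vec:
  assumes "Q d \<in> carrier_mat N N" "d < N" "y \<in> carrier_vec N"
  shows "Qdelta N Q d \<delta> *\<^sub>v y = calQ N Q *\<^sub>v y + (\<delta> * (row (Q d) 0 \<bullet> y)) \<cdot>\<^sub>v unit_vec N d"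
proof -
  have "barQ N Q d \<in> carrier_mat N N" unfolding barQ_def by simp
  with assms show ?thesis
    by (simp add: Qdelta_def add_mult_distrib_mat_vec[OF calQ_carrier] smult_mat_mult_vec
        barQ_mult_vec smult_smult_assoc)
qed

lemma Qdelta_carrier: "Qdelta N Q d \<delta> \<in> carrier_mat N N"
  unfolding Qdelta_def calQ_def barQ_def by simp

context
  fixes N d :: nat and Q :: "nat \<Rightarrow> real mat" and b :: "nat \<Rightarrow> real vec"
  assumes d: "0 < d" "d < N"
    and Q_carrier: "\<And>i. i < N \<Longrightarrow> Q i \<in> carrier_mat N N"
    and inv_reduced: "invertible_mat (mat_delete (calQ N Q) d 0)"
begin

lemma reduced_carrier: "mat_delete (calQ N Q) d 0 \<in> carrier_mat (N - 1) (N - 1)"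
  using mat_delete_carrier[OF calQ_carrier] .

lemma reduced_col_carrier: "col (del_row (calQ N Q) d) 0 \<in> carrier_vec (N - 1)"
  unfolding del_row_def using d calQ_carrier[of N Q] by simp

lemma Phi_carrier: "Phi N Q d \<in> carrier_vec N"
  and Phi_0: "Phi N Q d $ 0 = 1"
  and Phi_tail: "vec (N - 1) (\<lambda>j. Phi N Q d $ Suc j)
      = - (minv (mat_delete (calQ N Q) d 0) *\<^sub>v col (del_row (calQ N Q) d) 0)"
  using d minv_inverse(1)[OF reduced_carrier inv_reduced] reduced_col_carrier
  by (auto simp: Phi_def Let_def intro!: eq_vecI)

lemma row_calQ_split:
  assumes y: "y \<in> carrier_vec N" and r: "r < N - 1"
  shows "row (calQ N Q) (insert_index d r) \<bullet> y =
     col (del_row (calQ N Q) d) 0 $ r * y $ 0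
     + (mat_delete (calQ N Q) d 0 *\<^sub>v vec (N - 1) (\<lambda>j. y $ Suc j)) $ r"
proof -
  let ?i = "insert_index d r"
  have i: "?i < N" using r unfolding insert_index_def by auto
  have N: "N = Suc (N - 1)" using d by auto
  have "row (calQ N Q) ?i \<bullet> y = (\<Sum>j<N. calQ N Q $$ (?i, j) * y $ j)"
    unfolding scalar_prod_def using y i calQ_carrier[of N Q]
    by (auto simp: lessThan_atLeast0 intro!: sum.cong)
  also have "\<dots> = calQ N Q $$ (?i, 0) * y $ 0 + (\<Sum>j<N - 1. calQ N Q $$ (?i, Suc j) * y $ Suc j)"
    by (subst N, subst sum.lessThan_Suc_shift) simp
  finally show ?thesis
    using r i d calQ_carrier[of N Q]
    by (auto simp: scalar_prod_def mat_delete_def del_row_def insert_index_def lessThan_atLeast0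
        intro!: sum.cong)
qed

lemma eq_0_if_calQ_rows_off_d_vanish:
  assumes z: "z \<in> carrier_vec N" "z $ 0 = 0"
    and off_d: "\<And>m. m < N \<Longrightarrow> m \<noteq> d \<Longrightarrow> (calQ N Q *\<^sub>v z) $ m = 0"
  shows "z = 0\<^sub>v N"
proof -
  let ?M = "mat_delete (calQ N Q) d 0" and ?t = "vec (N - 1) (\<lambda>j. z $ Suc j)"
  have "?M *\<^sub>v ?t = 0\<^sub>v (N - 1)"
  proof (rule eq_vecI)
    fix r assume "r < dim_vec (0\<^sub>v (N - 1) :: real vec)"
    then have r: "r < N - 1" by simp
    have i: "insert_index d r < N" "insert_index d r \<noteq> d"
      using r unfolding insert_index_def by auto
    have "(?M *\<^sub>v ?t) $ r = row (calQ N Q) (insert_index d r) \<bullet> z"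
      using row_calQ_split[OF z(1) r] z(2) by simp
    also have "\<dots> = 0" using off_d[OF i] i(1) calQ_carrier[of N Q] by simp
    finally show "(?M *\<^sub>v ?t) $ r = 0\<^sub>v (N - 1) $ r" using r by simp
  qed (use reduced_carrier calQ_carrier[of N Q] in simp)
  then have "?t = minv ?M *\<^sub>v 0\<^sub>v (N - 1)"
    using minv_mult_mat_vec[OF reduced_carrier inv_reduced, of ?t] by simp
  also have "\<dots> = 0\<^sub>v (N - 1)"
    using minv_inverse(1)[OF reduced_carrier inv_reduced] by (intro eq_vecI) auto
  finally have tail: "?t = 0\<^sub>v (N - 1)" .
  show ?thesis
  proof (intro eq_vecI)
    fix i assume "i < dim_vec (0\<^sub>v N :: real vec)"
    with z tail show "z $ i = 0\<^sub>v N $ i" by (cases i) (auto simp: vec_eq_iff)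
  qed (use z in simp)
qed

lemma calQ_mult_Phi: "calQ N Q *\<^sub>v Phi N Q d = q3 N Q d \<cdot>\<^sub>v unit_vec N d"
proof (rule eq_vecI)
  let ?M = "mat_delete (calQ N Q) d 0" and ?c = "col (del_row (calQ N Q) d) 0"
  fix m assume "m < dim_vec (q3 N Q d \<cdot>\<^sub>v unit_vec N d)"
  then have m: "m < N" by simp
  show "(calQ N Q *\<^sub>v Phi N Q d) $ m = (q3 N Q d \<cdot>\<^sub>v unit_vec N d) $ m"
  proof (cases "m = d")
    case True
    then show ?thesis
      using m row_calQ[of m N Q, OF m Q_carrier[OF m]] calQ_carrier[of N Q] by (simp add: q3_def)
  next
    case False
    define r where "r = delete_index d m"
    have r: "r < N - 1" "insert_index d r = m"
      using m d False insert_delete_index[OF False] unfolding r_def delete_index_def by auto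
    have "(calQ N Q *\<^sub>v Phi N Q d) $ m = ?c $ r + (?M *\<^sub>v (- (minv ?M *\<^sub>v ?c))) $ r"
      using row_calQ_split[OF Phi_carrier r(1)] m r(2) calQ_carrier[of N Q]
      unfolding Phi_0 Phi_tail by simp
    also have "?M *\<^sub>v (- (minv ?M *\<^sub>v ?c)) = - ?c"
      using mult_mat_vec_minv[OF reduced_carrier inv_reduced reduced_col_carrier]
        minv_inverse(1)[OF reduced_carrier inv_reduced] reduced_col_carrier
      by (simp add: mult_mat_vec_uminus[OF reduced_carrier])
    finally have "(calQ N Q *\<^sub>v Phi N Q d) $ m = 0"
      using r(1) reduced_col_carrier[THEN carrier_vecD] by simp
    then show ?thesis using m False d by simp
  qed
qed (simp add: calQ_def)

lemma eq_smult_Phi_if_calQ_mult_vec_unit_vec: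
  assumes y: "y \<in> carrier_vec N" and Qy: "calQ N Q *\<^sub>v y = a \<cdot>\<^sub>v unit_vec N d"
  shows "y = y $ 0 \<cdot>\<^sub>v Phi N Q d"
proof -
  let ?z = "y - y $ 0 \<cdot>\<^sub>v Phi N Q d"
  have z: "?z \<in> carrier_vec N" "?z $ 0 = 0"
    using y d Phi_carrier Phi_0 by auto
  have "calQ N Q *\<^sub>v ?z = a \<cdot>\<^sub>v unit_vec N d - y $ 0 \<cdot>\<^sub>v (q3 N Q d \<cdot>\<^sub>v unit_vec N d)"
    using y Phi_carrier calQ_carrier[of N Q]
    by (simp add: mult_minus_distrib_mat_vec mult_mat_vec Qy calQ_mult_Phi)
  then have z0: "?z = 0\<^sub>v N"
    using eq_0_if_calQ_rows_off_d_vanish[OF z] by (simp add: unit_vec_def)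
  show ?thesis
  proof (rule eq_vecI)
    fix i assume i: "i < dim_vec (y $ 0 \<cdot>\<^sub>v Phi N Q d)"
    have "?z $ i = 0" using z0 i Phi_carrier by simp
    then show "y $ i = (y $ 0 \<cdot>\<^sub>v Phi N Q d) $ i" using i y Phi_carrier by simp
  qed (use y Phi_carrier in simp)
qed

lemma Qdelta_mult_Phi:
  "Qdelta N Q d \<delta> *\<^sub>v Phi N Q d = (q2 N Q d * \<delta> + q3 N Q d) \<cdot>\<^sub>v unit_vec N d"
  using Q_carrier d
  by (auto simp: Qdelta_mult_vec Phi_carrier calQ_mult_Phi q2_def add_smult_distrib_vec)

lemma Qdelta_mult_vec_eq_zero:
  assumes s: "q2 N Q d * \<delta> + q3 N Q d \<noteq> 0"
    and y: "y \<in> carrier_vec N" and Qy: "Qdelta N Q d \<delta> *\<^sub>v y = 0\<^sub>v N"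
  shows "y = 0\<^sub>v N"
proof -
  have "calQ N Q *\<^sub>v y = (- \<delta> * (row (Q d) 0 \<bullet> y)) \<cdot>\<^sub>v unit_vec N d"
  proof (rule eq_vecI)
    fix i assume "i < dim_vec ((- \<delta> * (row (Q d) 0 \<bullet> y)) \<cdot>\<^sub>v unit_vec N d)"
    then have i: "i < N" by simp
    have "(Qdelta N Q d \<delta> *\<^sub>v y) $ i = 0" using Qy i by simp
    then show "(calQ N Q *\<^sub>v y) $ i = ((- \<delta> * (row (Q d) 0 \<bullet> y)) \<cdot>\<^sub>v unit_vec N d) $ i"
      using i d calQ_carrier[of N Q]
      unfolding Qdelta_mult_vec[where Q = Q, OF Q_carrier[OF d(2)] d(2) y] by simp
  qed (use calQ_carrier[of N Q] in simp)
  then have y_Phi: "y = y $ 0 \<cdot>\<^sub>v Phi N Q d"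
    using eq_smult_Phi_if_calQ_mult_vec_unit_vec[OF y] by blast
  have "0\<^sub>v N = Qdelta N Q d \<delta> *\<^sub>v (y $ 0 \<cdot>\<^sub>v Phi N Q d)"
    using Qy y_Phi by metis
  also have "\<dots> = (y $ 0 * (q2 N Q d * \<delta> + q3 N Q d)) \<cdot>\<^sub>v unit_vec N d"
    using mult_mat_vec[OF Qdelta_carrier Phi_carrier]
    by (simp add: Qdelta_mult_Phi smult_smult_assoc)
  finally have "0\<^sub>v N $ d = ((y $ 0 * (q2 N Q d * \<delta> + q3 N Q d)) \<cdot>\<^sub>v unit_vec N d) $ d"
    by simp
  then have "y $ 0 = 0"
    using s d by simp
  note y_Phi
  also have "y $ 0 \<cdot>\<^sub>v Phi N Q d = 0\<^sub>v N"
    using \<open>y $ 0 = 0\<close> Phi_carrier by (intro eq_vecI) auto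
  finally show ?thesis .
qed

lemma Qdelta_invertible:
  assumes "q2 N Q d * \<delta> + q3 N Q d \<noteq> 0"
  shows "invertible_mat (Qdelta N Q d \<delta>)"
  using invertible_mat_if_mult_vec_inj[OF Qdelta_carrier] Qdelta_mult_vec_eq_zero[OF assms] .

lemma Delta1_denominator_nonzero:
  assumes "\<delta> \<in> Delta1 N Q d k"
  shows "q2 N Q d * \<delta> + q3 N Q d \<noteq> 0"
proof
  assume "q2 N Q d * \<delta> + q3 N Q d = 0"
  then have "Qdelta N Q d \<delta> *\<^sub>v Phi N Q d = 0\<^sub>v N"
    by (auto simp: Qdelta_mult_Phi intro!: eq_vecI)
  then have "Phi N Q d = 0\<^sub>v N"
    using assms hurwitz_neg_smult_mult_vec_eq_zero[OF _ Qdelta_carrier Phi_carrier]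
    unfolding Delta1_def by blast
  then show False
    using Phi_0 d by (metis index_zero_vec(1) order.strict_trans zero_neq_one)
qed

context
  assumes inv_calQ: "invertible_mat (calQ N Q)"
begin

lemma xstar_carrier: "xstar N Q b \<in> carrier_vec N"
  using minv_inverse(1)[OF calQ_carrier inv_calQ] by (simp add: xstar_def calB_def)

lemma Qdelta_mult_line:
  assumes s: "q2 N Q d * \<delta> + q3 N Q d \<noteq> 0"
  shows "Qdelta N Q d \<delta> *\<^sub>v (xstar N Q b + fdec N Q b d \<delta> \<cdot>\<^sub>v Phi N Q d) = - Bdelta N b d \<delta>"
proof -
  let ?x = "xstar N Q b" and ?f = "fdec N Q b d \<delta>" and ?r = "row (Q d) 0 \<bullet> xstar N Q b"
  have f: "\<delta> * ?r + ?f * (q2 N Q d * \<delta> + q3 N Q d) = - (\<delta> * b d $ 0)"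
    using s by (simp add: fdec_def q1_def field_simps)
  have "Qdelta N Q d \<delta> *\<^sub>v (?x + ?f \<cdot>\<^sub>v Phi N Q d)
      = Qdelta N Q d \<delta> *\<^sub>v ?x + ?f \<cdot>\<^sub>v (Qdelta N Q d \<delta> *\<^sub>v Phi N Q d)"
    using xstar_carrier Phi_carrier
    by (simp add: mult_add_distrib_mat_vec[OF Qdelta_carrier] mult_mat_vec[OF Qdelta_carrier])
  also have "\<dots> = - calB N b + (\<delta> * ?r) \<cdot>\<^sub>v unit_vec N d
      + ?f \<cdot>\<^sub>v ((q2 N Q d * \<delta> + q3 N Q d) \<cdot>\<^sub>v unit_vec N d)"
    using Qdelta_mult_vec[where Q = Q, OF Q_carrier[OF d(2)] d(2) xstar_carrier] calQ_mult_xstar[OF inv_calQ]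
    by (simp add: Qdelta_mult_Phi)
  also have "\<dots> = - Bdelta N b d \<delta>"
  proof (rule eq_vecI)
    fix i assume "i < dim_vec (- Bdelta N b d \<delta>)"
    then have i: "i < N" by (simp add: Bdelta_def calB_def barB_def)
    show "(- calB N b + (\<delta> * ?r) \<cdot>\<^sub>v unit_vec N d
        + ?f \<cdot>\<^sub>v ((q2 N Q d * \<delta> + q3 N Q d) \<cdot>\<^sub>v unit_vec N d)) $ i = (- Bdelta N b d \<delta>) $ i"
      using f i d by (cases "i = d") (simp_all add: Bdelta_def barB_eq calB_def)
  qed (simp add: Bdelta_def calB_def barB_def)
  finally show ?thesis .
qed

lemma xdelta_eq_line:
  assumes s: "q2 N Q d * \<delta> + q3 N Q d \<noteq> 0"
  shows "xdelta N Q b d \<delta> = xstar N Q b + fdec N Q b d \<delta> \<cdot>\<^sub>v Phi N Q d"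
proof -
  have x: "xstar N Q b + fdec N Q b d \<delta> \<cdot>\<^sub>v Phi N Q d \<in> carrier_vec N"
    using xstar_carrier Phi_carrier by simp
  have "xdelta N Q b d \<delta> = minv (Qdelta N Q d \<delta>) *\<^sub>v (- Bdelta N b d \<delta>)"
    using minv_inverse(1)[OF Qdelta_carrier Qdelta_invertible[OF s]]
    by (simp add: xdelta_def mult_mat_vec_uminus Bdelta_def barB_def calB_def)
  also have "\<dots> = xstar N Q b + fdec N Q b d \<delta> \<cdot>\<^sub>v Phi N Q d"
    using minv_mult_mat_vec[OF Qdelta_carrier Qdelta_invertible[OF s] x] by (simp add: Qdelta_mult_line[OF s])
  finally show ?thesis .
qed

lemma Jc_xdelta:
  fixes p :: "nat \<Rightarrow> real"
  assumes sym: "transpose_mat (Q 0) = Q 0" and b0: "b 0 \<in> carrier_vec N"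
    and s: "q2 N Q d * \<delta> + q3 N Q d \<noteq> 0"
  shows "Jc (Q 0) (b 0) (p 0) (xdelta N Q b d \<delta>) = calJ N Q b p d 0 (fdec N Q b d \<delta>)"
  using Jc_add_smult[OF Q_carrier sym b0 xstar_carrier Phi_carrier] d
  by (simp add: xdelta_eq_line[OF s] calJ_def r1_def r2_def)

lemma DERIV_Jc_xdelta:
  fixes p :: "nat \<Rightarrow> real"
  assumes sym: "transpose_mat (Q 0) = Q 0" and b0: "b 0 \<in> carrier_vec N"
    and s: "q2 N Q d * \<delta> + q3 N Q d \<noteq> 0"
  shows "((\<lambda>\<delta>. Jc (Q 0) (b 0) (p 0) (xdelta N Q b d \<delta>)) has_real_derivative
      (2 * r2 N Q d 0 * fdec N Q b d \<delta> + r1 N Q b d 0) * (q1 N Q b d * q3 N Q d / (q2 N Q d * \<delta> + q3 N Q d)^2))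
    (at \<delta>)"
proof -
  have g: "(calJ N Q b p d 0 has_real_derivative 2 * r2 N Q d 0 * e + r1 N Q b d 0) (at e)" for e
    unfolding calJ_def by (auto intro!: derivative_eq_intros)
  have f: "(fdec N Q b d has_real_derivative q1 N Q b d * q3 N Q d / (q2 N Q d * \<delta> + q3 N Q d)^2) (at \<delta>)"
    using DERIV_linear_over_affine[OF s] unfolding fdec_def[abs_def] .
  have "open {\<delta>. q2 N Q d * \<delta> + q3 N Q d \<noteq> 0}"
    by (intro open_Collect_neq continuous_intros)
  then show ?thesis
    by (rule has_field_derivative_transform_within_open[OF DERIV_chain2[OF g f]])
      (use s Jc_xdelta[OF sym b0] in auto)
qed

lemma attainable_iff:
  fixes p :: "nat \<Rightarrow> real"
  assumes sym: "transpose_mat (Q 0) = Q 0" and b0: "b 0 \<in> carrier_vec N"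
    and r12: "r2 N Q d 0 \<noteq> 0"
  shows "attainable N Q b p d k eps1 J \<longleftrightarrow>
    (\<exists>\<delta>\<in>Delta1 N Q d k. calJ N Q b p d 0 (fdec N Q b d \<delta>) = J \<and>
       eps1 * r2 N Q d 0 * q1 N Q b d * q3 N Q d
         * (fdec N Q b d \<delta> - - r1 N Q b d 0 / (2 * r2 N Q d 0)) < 0)"
proof -
  let ?J = "\<lambda>\<delta>. Jc (Q 0) (b 0) (p 0) (xdelta N Q b d \<delta>)"
  have "(\<exists>D. (?J has_real_derivative D) (at \<delta>) \<and> eps1 * D < 0)
     \<longleftrightarrow> eps1 * r2 N Q d 0 * q1 N Q b d * q3 N Q d
         * (fdec N Q b d \<delta> - - r1 N Q b d 0 / (2 * r2 N Q d 0)) < 0"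
    if s: "q2 N Q d * \<delta> + q3 N Q d \<noteq> 0" for \<delta>
  proof -
    note der = DERIV_Jc_xdelta[where p = p, OF sym b0 s]
    have "(\<exists>D. (?J has_real_derivative D) (at \<delta>) \<and> eps1 * D < 0)
        \<longleftrightarrow> eps1 * ((2 * r2 N Q d 0 * fdec N Q b d \<delta> + r1 N Q b d 0)
            * (q1 N Q b d * q3 N Q d / (q2 N Q d * \<delta> + q3 N Q d)^2)) < 0"
      using DERIV_unique[OF _ der] der by blast
    also have "\<dots> \<longleftrightarrow> eps1 * r2 N Q d 0 * q1 N Q b d * q3 N Q d
         * (fdec N Q b d \<delta> - - r1 N Q b d 0 / (2 * r2 N Q d 0)) < 0"
      using chain_derivative_less_0_iff[OF r12 s] by (simp add: mult.assoc)
    finally show ?thesis .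
  qed
  then show ?thesis
    unfolding attainable_def using Delta1_denominator_nonzero Jc_xdelta[OF sym b0]
    by (metis (no_types, lifting))
qed

end

end

theorem theorem2:
  fixes N d :: nat and Q :: "nat \<Rightarrow> real mat" and b :: "nat \<Rightarrow> real vec" and p :: "nat \<Rightarrow> real"
    and k eps1 :: real and \<Omega> :: "real set"
  assumes dims: "\<And>i. i < N \<Longrightarrow> Q i \<in> carrier_mat N N \<and> b i \<in> carrier_vec N"
    and sym: "\<And>i. i < N \<Longrightarrow> transpose_mat (Q i) = Q i"
    and d: "0 < d" "d < N"
    and k: "k > 0"
    and hur: "hurwitz (- (k \<cdot>\<^sub>m calQ N Q))"
    and inv: "invertible_mat (mat_delete (calQ N Q) d 0)"
    and eps: "eps1 \<noteq> 0"
    and Omega: "\<Omega> = {Jref. attainable N Q b p d k eps1 Jref}"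
    and r12: "r2 N Q d 0 \<noteq> 0"
  shows "(eps1 * r2 N Q d 0 * q1 N Q b d * q3 N Q d > 0 \<longrightarrow>
            \<Omega> = calJ N Q b p d 0 ` ({..< - r1 N Q b d 0 / (2 * r2 N Q d 0)} \<inter> fdec N Q b d ` Delta1 N Q d k))
       \<and> (eps1 * r2 N Q d 0 * q1 N Q b d * q3 N Q d < 0 \<longrightarrow>
            \<Omega> = calJ N Q b p d 0 ` ({- r1 N Q b d 0 / (2 * r2 N Q d 0) <..} \<inter> fdec N Q b d ` Delta1 N Q d k))"
proof -
  let ?P = "eps1 * r2 N Q d 0 * q1 N Q b d * q3 N Q d" and ?v = "- r1 N Q b d 0 / (2 * r2 N Q d 0)"
  have Q_carrier: "\<And>i. i < N \<Longrightarrow> Q i \<in> carrier_mat N N" using dims by blast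
  have "invertible_mat (calQ N Q)"
    using invertible_mat_if_mult_vec_inj[OF calQ_carrier]
      hurwitz_neg_smult_mult_vec_eq_zero[OF hur calQ_carrier] by blast
  moreover have "0 < N" using d by simp
  ultimately have "attainable N Q b p d k eps1 J \<longleftrightarrow>
      (\<exists>\<delta>\<in>Delta1 N Q d k. calJ N Q b p d 0 (fdec N Q b d \<delta>) = J \<and> ?P * (fdec N Q b d \<delta> - ?v) < 0)"
    for J using attainable_iff[OF d Q_carrier inv _ sym _ r12] dims by blast
  then have "\<Omega> = {J. \<exists>\<delta>\<in>Delta1 N Q d k. calJ N Q b p d 0 (fdec N Q b d \<delta>) = J
      \<and> ?P * (fdec N Q b d \<delta> - ?v) < 0}"
    unfolding Omega by blast
  also have "\<dots> = calJ N Q b p d 0 ` ({e. ?P * (e - ?v) < 0} \<inter> fdec N Q b d ` Delta1 N Q d k)"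
    by blast
  finally have "\<Omega> = calJ N Q b p d 0 ` ({e. ?P * (e - ?v) < 0} \<inter> fdec N Q b d ` Delta1 N Q d k)" .
  then show ?thesis
    using Collect_mult_diff_less_0[of ?P ?v] by (intro conjI impI) (simp_all only:)
qed

end
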